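(* Let $\mathbf z=(z_i)_{i=1}^N$ be a centered infinitesimally rigid crystal and $\mathbf x\in\mathcal M_\infty(\bar c(\mathbf z))$. Then for $1\le\gamma\le d$ and $1\le i\le N$, $$\frac{\partial\theta}{\partial x_i^\gamma}(\mathbf x)=\theta(\mathbf x)\{\mathrm{Proj}\circ(Q(\mathbf x)\theta(\mathbf x))\}^{-1}\mathrm{Proj}\{(\theta(\mathbf x)^{-1}\mathbf e_\gamma)\otimes z_i\},$$ where $\{\mathrm{Proj}\circ(Q(\mathbf x)\theta(\mathbf x))\}^{-1}$ denotes the inverse of the linear map $\mathfrak{so}(d)\ni X\mapsto\mathrm{Proj}(Q(\mathbf x)\theta(\mathbf x)X)\in\mathfrak{so}(d)$.
   Context: Let $d\ge1$, $U\in C^3_0(\mathbb R)$ even with unique $a>0$ with $U(a)=\min_{r\ge0}U(r)$ and $\check c:=U''(a)>0$; $b=\inf\{r>0:U(s)=0\ \forall s>r\}$. A crystal is $\mathbf z=(z_i)_{i=1}^N\in(\mathbb R^d)^N$ with $|z_i-z_j|=a$ or $>b$ for $i\ne j$; pairs at distance $a$ are neighboring, $\langle i,j\rangle$; centered means $\sum_iz_i=0$. $\varphi_{\theta,\eta}(\mathbf z)=(\theta z_i+\eta)_i$ for $\theta\in SO(d),\eta\in\mathbb R^d$; $\mathcal M=\{\varphi_{\theta,\eta}(\mathbf z)\}$. $\mathcal H_{\mathbf z}=\{(Xz_i+h)_i:X\in\mathfrak{so}(d),h\in\mathbb R^d\}$; $\mathbf z$ is infinitesimally rigid if $\sum_{\langle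 i,j\rangle}(h_i-h_j,z_i-z_j)^2=0$ holds only for $\mathbf h\in\mathcal H_{\mathbf z}$. $\bar c(\mathbf z)>0$ is a constant such that every $\mathbf x$ with $\inf_{\mathbf y\in\mathcal M}\max_i|x_i-y_i|\le\bar c(\mathbf z)$ has a unique minimizer $\mathbf z(\mathbf x)\in\mathcal M$ of $\|\mathbf x-\mathbf y\|_2=(\sum_i|x_i-y_i|^2)^{1/2}$; $\mathcal M_\infty(c)=\{\mathbf x:\max_i|x_i-\mathbf z(\mathbf x)_i|\le c\}$. For such $\mathbf x$, $\theta(\mathbf x)\in SO(d)$ is defined by $\mathbf z(\mathbf x)=\varphi_{\theta(\mathbf x),\eta}(\mathbf z)$ for some $\eta$. $M(d)$ has inner product $(X,Y)=\mathrm{Tr}(X\,{}^tY)$; $\mathrm{Proj}X=(X-{}^tX)/2$ is the orthogonal projection onto $\mathfrak{so}(d)$. For $e,\tilde e\in\mathbb R^d$, $(e\otimes\tilde e)^{\alpha\beta}=e^\alpha\tilde e^\beta$; $\mathbf e_\gamma$ is the $\gamma$-th unit vector; $Q(\mathbf x)=\sum_{i=1}^Nz_i\otimes x_i$. *)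

theory Defs
  imports "HOL-Analysis.Analysis"
begin

definition C3_0 :: "(real \<Rightarrow> real) \<Rightarrow> bool" where
  "C3_0 U \<longleftrightarrow> (\<forall>r. U field_differentiable at r) \<and>
     (\<forall>r. deriv U field_differentiable at r) \<and>
     (\<forall>r. deriv (deriv U) field_differentiable at r) \<and>
     continuous_on UNIV (deriv (deriv (deriv U))) \<and>
     bounded {r. U r \<noteq> 0}"

definition crystal :: "real \<Rightarrow> real \<Rightarrow> real^'d^'n \<Rightarrow> bool" where
  "crystal a b z \<longleftrightarrow> (\<forall>i j. i \<noteq> j \<longrightarrow> dist (z$i) (z$j) = a \<or> dist (z$i) (z$j) > b)"

definition centered :: "real^'d^'n \<Rightarrow> bool" where
  "centered z \<longleftrightarrow> (\<Sum>i\<in>UNIV. z$i) = 0"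

definition SO :: "(real^'d^'d) set" where
  "SO = {R. orthogonal_matrix R \<and> det R = 1}"

definition so :: "(real^'d^'d) set" where
  "so = {X. transpose X = - X}"

definition Proj :: "real^'d^'d \<Rightarrow> real^'d^'d" where
  "Proj X = (1/2) *\<^sub>R (X - transpose X)"

definition outer :: "real^'d \<Rightarrow> real^'d \<Rightarrow> real^'d^'d" where
  "outer e f = (\<chi> \<alpha> \<beta>. e$\<alpha> * f$\<beta>)"

definition H_space :: "real^'d^'n \<Rightarrow> (real^'d^'n) set" where
  "H_space z = {h. \<exists>X\<in>so. \<exists>\<eta>. \<forall>i. h$i = X *v z$i + \<eta>}"

definition inf_rigid :: "real \<Rightarrow> real^'d^'n \<Rightarrow> bool" where
  "inf_rigid a z \<longleftrightarrow> (\<forall>h::real^'d^'n.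
     (\<Sum>(i,j)\<in>{(i,j). dist (z$i) (z$j) = a}. ((h$i - h$j) \<bullet> (z$i - z$j))\<^sup>2) = 0
       \<longrightarrow> h \<in> H_space z)"

definition phi :: "real^'d^'d \<Rightarrow> real^'d \<Rightarrow> real^'d^'n \<Rightarrow> real^'d^'n" where
  "phi R \<eta> z = (\<chi> i. R *v z$i + \<eta>)"

definition Mfd :: "real^'d^'n \<Rightarrow> (real^'d^'n) set" where
  "Mfd z = {phi R \<eta> z | R \<eta>. R \<in> SO}"

definition supdist :: "real^'d^'n \<Rightarrow> real^'d^'n \<Rightarrow> real" where
  "supdist x y = (MAX i. norm (x$i - y$i))"

text \<open>Region where the nearest point is assumed to exist uniquely.\<close>
definition zdom :: "real^'d^'n \<Rightarrow> real \<Rightarrow> (real^'d^'n) set" where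
  "zdom z c = {x. (INF y\<in>Mfd z. supdist x y) \<le> c}"

text \<open>cbar property: unique L2 (= dist on real^'d^'n) minimiser on zdom.\<close>
definition cbar_ok :: "real^'d^'n \<Rightarrow> real \<Rightarrow> bool" where
  "cbar_ok z c \<longleftrightarrow> c > 0 \<and> (\<forall>x\<in>zdom z c. \<exists>!y. y \<in> Mfd z \<and> (\<forall>y'\<in>Mfd z. dist x y \<le> dist x y'))"

definition zmin :: "real^'d^'n \<Rightarrow> real^'d^'n \<Rightarrow> real^'d^'n" where
  "zmin z x = (THE y. y \<in> Mfd z \<and> (\<forall>y'\<in>Mfd z. dist x y \<le> dist x y'))"

definition Minf :: "real^'d^'n \<Rightarrow> real \<Rightarrow> real \<Rightarrow> (real^'d^'n) set" where
  "Minf z cbar c = {x \<in> zdom z cbar. supdist x (zmin z x) \<le> c}"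

definition theta :: "real^'d^'n \<Rightarrow> real^'d^'n \<Rightarrow> real^'d^'d" where
  "theta z x = (THE R. R \<in> SO \<and> (\<exists>\<eta>. zmin z x = phi R \<eta> z))"

definition Qm :: "real^'d^'n \<Rightarrow> real^'d^'n \<Rightarrow> real^'d^'d" where
  "Qm z x = (\<Sum>i\<in>UNIV. outer (z$i) (x$i))"

definition Lmap :: "real^'d^'d \<Rightarrow> real^'d^'d \<Rightarrow> real^'d^'d" where
  "Lmap A X = Proj (A ** X)"

definition Edir :: "'n \<Rightarrow> 'd \<Rightarrow> real^'d^'n" where
  "Edir i \<gamma> = (\<chi> j. if j = i then axis \<gamma> 1 else 0)"

end

theory Submission
  imports Defs
begin

text \<open>Since \<open>z\<close> is centered, the nearest point of the orbit \<open>Mfd z\<close> to \<open>x\<close> has rotation part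
  \<open>theta z x\<close> maximising \<open>R \<mapsto> trace (R ** Qm z x)\<close> over \<open>SO\<close>, and along the line
  \<open>x + t e\<close> the matrix \<open>Qm\<close> moves affinely, \<open>Q0 + t Q1\<close>. At a maximiser \<open>R0\<close> of
  \<open>trace (R ** Q)\<close> the first-order condition (perturbation along Cayley transforms) makes
  \<open>Q R0\<close> symmetric, and uniqueness of the maximiser makes \<open>X \<mapsto> Proj (Q R0 X)\<close> injective,
  hence invertible, on \<open>so\<close>. Writing \<open>theta(t) = theta(0) (I + D(t))\<close>, symmetry of
  \<open>(Q0 + t Q1) theta(t)\<close> determines the skew part of \<open>D\<close> up to \<open>O(|t| |D| + |D|\<^sup>2)\<close>, while the
  symmetric part of \<open>D\<close> is \<open>O(|D|\<^sup>2)\<close> because \<open>I + D\<close> is orthogonal. Compactness of \<open>SO\<close>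
  and uniqueness give \<open>D(t) \<rightarrow> 0\<close>, and the estimate then bootstraps to \<open>D(t) = t Y + O(t\<^sup>2)\<close>.\<close>

section \<open>Matrix algebra and the Frobenius norm\<close>

lemma matrix_add_rdistrib: "((A::'a::semiring_1^'n^'m) + B) ** C = A ** C + B ** C"
  by (simp add: matrix_matrix_mult_def vec_eq_iff sum.distrib distrib_right)

lemma matrix_diff_ldistrib: "(A::'a::ring_1^'n^'m) ** (B - C) = A ** B - A ** C"
  by (simp add: matrix_matrix_mult_def vec_eq_iff sum_subtractf right_diff_distrib)

lemma matrix_neg_left: "(- (A::'a::ring_1^'n^'m)) ** B = - (A ** B)"
  by (simp add: matrix_matrix_mult_def vec_eq_iff sum_negf)

lemma transpose_zero [simp]: "transpose (0::'a::zero^'n^'m) = 0"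
  by (simp add: transpose_def vec_eq_iff)

lemma transpose_add: "transpose ((A::'a::plus^'n^'m) + B) = transpose A + transpose B"
  by (simp add: transpose_def vec_eq_iff)

lemma transpose_diff: "transpose ((A::'a::minus^'n^'m) - B) = transpose A - transpose B"
  by (simp add: transpose_def vec_eq_iff)

lemma transpose_uminus: "transpose (- (A::'a::uminus^'n^'m)) = - transpose A"
  by (simp add: transpose_def vec_eq_iff)

lemma
  assumes "invertible (A::'a::semiring_1^'n^'m)"
  shows matrix_inv_right: "A ** matrix_inv A = mat 1"
    and matrix_inv_left: "matrix_inv A ** A = mat 1"
proof -
  have "\<exists>A'. A ** A' = mat 1 \<and> A' ** A = mat 1"
    using assms by (simp add: invertible_def)
  then have "A ** matrix_inv A = mat 1 \<and> matrix_inv A ** A = mat 1"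
    unfolding matrix_inv_def by (rule someI_ex)
  then show "A ** matrix_inv A = mat 1" "matrix_inv A ** A = mat 1"
    by auto
qed

lemma bounded_bilinear_matrix_mult:
  "bounded_bilinear ((**) :: real^'n^'m \<Rightarrow> real^'p^'n \<Rightarrow> real^'p^'m)"
  unfolding bilinear_conv_bounded_bilinear[symmetric] bilinear_def
  by (auto intro!: linearI simp: matrix_add_ldistrib matrix_add_rdistrib
      matrix_scalar_ac scalar_matrix_assoc[symmetric])

lemma bounded_linear_transpose: "bounded_linear (transpose :: real^'n^'m \<Rightarrow> real^'m^'n)"
  unfolding linear_conv_bounded_linear[symmetric]
  by (rule linearI) (simp_all add: transpose_add transpose_scalar)

lemma inner_transpose: "transpose A \<bullet> transpose B = (A::real^'n^'m) \<bullet> B"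
  unfolding inner_vec_def transpose_def by (subst sum.swap) simp

lemma norm_transpose: "norm (transpose (A::real^'n^'m)) = norm A"
  by (simp add: norm_eq_sqrt_inner inner_transpose)

lemma trace_matrix_mult_eq_inner: "trace ((A::real^'n^'m) ** B) = transpose A \<bullet> B"
  unfolding trace_def matrix_matrix_mult_def inner_vec_def transpose_def
  by (subst sum.swap) simp

lemma abs_trace_matrix_mult_le: "\<bar>trace ((A::real^'n^'m) ** B)\<bar> \<le> norm A * norm B"
  using Cauchy_Schwarz_ineq2[of "transpose A" B]
  by (simp add: trace_matrix_mult_eq_inner norm_transpose)

lemma trace_scaleR: "trace (c *\<^sub>R (A::real^'n^'n)) = c * trace A"
  by (simp add: trace_def sum_distrib_left)

lemma norm_matrix_mult_le: "norm ((A::real^'n^'m) ** (B::real^'p^'n)) \<le> norm A * norm B"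
proof -
  have row: "norm ((A ** B) $ i) \<le> norm (A $ i) * norm B" for i
  proof -
    have "(A ** B) $ i = (\<Sum>k\<in>UNIV. A $ i $ k *\<^sub>R B $ k)"
      unfolding matrix_matrix_mult_def by (simp add: vec_eq_iff sum_component)
    then have "norm ((A ** B) $ i) \<le> (\<Sum>k\<in>UNIV. norm (A $ i $ k *\<^sub>R B $ k))"
      by (simp only: norm_sum)
    also have "\<dots> = (\<Sum>k\<in>UNIV. \<bar>A $ i $ k\<bar> * \<bar>norm (B $ k)\<bar>)"
      by simp
    also have "\<dots> \<le> L2_set (\<lambda>k. A $ i $ k) UNIV * L2_set (\<lambda>k. norm (B $ k)) UNIV"
      by (rule L2_set_mult_ineq)
    also have "L2_set (\<lambda>k. A $ i $ k) UNIV = norm (A $ i)"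
      by (simp add: norm_vec_def L2_set_def)
    also have "L2_set (\<lambda>k. norm (B $ k)) UNIV = norm B"
      by (simp only: norm_vec_def[of B])
    finally show ?thesis .
  qed
  have "norm (A ** B) \<le> L2_set (\<lambda>i. norm (A $ i) * norm B) UNIV"
    unfolding norm_vec_def[of "A ** B"] by (rule L2_set_mono) (use row in auto)
  also have "\<dots> = norm A * norm B"
    by (simp only: norm_vec_def[of A] L2_set_left_distrib norm_ge_zero)
  finally show ?thesis .
qed

lemma norm_orthogonal_matrix_mult:
  assumes "orthogonal_matrix (R::real^'m^'m)"
  shows "norm (R ** (A::real^'n^'m)) = norm A"
proof -
  have "transpose (R ** A) ** (R ** A) = transpose A ** ((transpose R ** R) ** A)"
    by (simp add: matrix_transpose_mul matrix_mul_assoc)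
  also have "\<dots> = transpose A ** A"
    using assms by (simp add: orthogonal_matrix)
  finally show ?thesis
    using trace_matrix_mult_eq_inner[of "transpose (R ** A)" "R ** A"]
      trace_matrix_mult_eq_inner[of "transpose A" A]
    by (simp add: norm_eq_sqrt_inner)
qed

section \<open>The Lie algebra \<open>so\<close> and the group \<open>SO\<close>\<close>

lemma subspace_so: "subspace (so :: (real^'n^'n) set)"
  unfolding subspace_def so_def by (simp add: transpose_add transpose_scalar)

lemma closed_so: "closed (so :: (real^'n^'n) set)"
proof -
  have "(so :: (real^'n^'n) set) = {X. transpose X + X = 0}"
    unfolding so_def by (simp only: eq_neg_iff_add_eq_0)
  moreover have "closed {X::real^'n^'n. transpose X + X = 0}"
    by (intro closed_Collect_eq continuous_intros linear_continuous_on bounded_linear_transpose)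
  ultimately show ?thesis by simp
qed

lemma so_uminus: "X \<in> so \<Longrightarrow> - X \<in> so"
  by (simp add: so_def transpose_uminus)

lemma Proj_in_so [simp]: "Proj X \<in> so"
  by (simp add: Proj_def so_def transpose_diff transpose_scalar flip: scaleR_minus_right)

lemma Proj_eq_0_iff: "Proj X = 0 \<longleftrightarrow> transpose X = X"
  by (auto simp: Proj_def)

lemma Proj_transpose: "Proj (transpose X) = - Proj X"
  unfolding Proj_def by (metis minus_diff_eq scaleR_minus_right transpose_transpose)

lemma Proj_add: "Proj (X + Y) = Proj X + Proj Y"
  by (simp add: Proj_def transpose_add algebra_simps)

lemma Proj_diff: "Proj (X - Y) = Proj X - Proj Y"
  by (simp add: Proj_def transpose_diff algebra_simps)

lemma Proj_scaleR: "Proj (c *\<^sub>R X) = c *\<^sub>R Proj X"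
  by (simp add: Proj_def transpose_scalar algebra_simps)

lemma norm_Proj_le: "norm (Proj X) \<le> norm X"
proof -
  have "norm (Proj X) \<le> (1/2) * (norm X + norm (transpose X))"
    unfolding Proj_def using norm_triangle_ineq4[of X "transpose X"] by simp
  then show ?thesis by (simp add: norm_transpose)
qed

lemma SO_orthogonal_matrix: "R \<in> SO \<Longrightarrow> orthogonal_matrix R"
  by (simp add: SO_def)

lemma SO_transpose_mult_self: "R \<in> SO \<Longrightarrow> transpose R ** R = mat 1"
  by (simp add: SO_def orthogonal_matrix)

lemma SO_mult_transpose_self: "R \<in> SO \<Longrightarrow> R ** transpose R = mat 1"
  by (simp add: SO_def orthogonal_matrix_def)

lemma mat_1_in_SO: "mat 1 \<in> SO"
  by (simp add: SO_def orthogonal_matrix_id det_I)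

lemma SO_mult: "A \<in> SO \<Longrightarrow> B \<in> SO \<Longrightarrow> A ** B \<in> SO"
  by (simp add: SO_def orthogonal_matrix_mul det_mul)

lemma SO_transpose: "R \<in> SO \<Longrightarrow> transpose R \<in> SO"
  by (simp add: SO_def)

lemma matrix_inv_SO: "R \<in> SO \<Longrightarrow> matrix_inv R = transpose R"
  by (metis SO_mult_transpose_self SO_transpose_mult_self invertible_def matrix_inv_right
      matrix_mul_assoc matrix_mul_lid)

lemma norm_SO: "R \<in> (SO :: (real^'n^'n) set) \<Longrightarrow> norm R = sqrt CARD('n)"
proof -
  assume "R \<in> SO"
  then have "norm (R $ i) = 1" for i
    using orthogonal_matrix_orthonormal_rows[of R] by (simp add: SO_def row_def)
  then show ?thesis by (simp add: norm_vec_def L2_set_def)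
qed

lemma abs_trace_SO_mult_le: "R \<in> SO \<Longrightarrow> \<bar>trace (R ** Q)\<bar> \<le> sqrt CARD('n) * norm (Q::real^'n^'n)"
  using abs_trace_matrix_mult_le[of R Q] norm_SO[of R] by simp

lemma compact_SO: "compact SO"
proof -
  have "continuous_on UNIV (det :: real^'n^'n \<Rightarrow> real)"
    unfolding det_def
    by (intro continuous_on_sum continuous_on_mult continuous_on_const continuous_on_prod
        continuous_on_component continuous_on_id)
  moreover have "continuous_on UNIV (\<lambda>R::real^'n^'n. transpose R ** R)"
    by (intro bounded_bilinear.continuous_on[OF bounded_bilinear_matrix_mult]
        linear_continuous_on bounded_linear_transpose continuous_on_id)
  ultimately have "closed (SO :: (real^'n^'n) set)"
    unfolding SO_def orthogonal_matrix
    by (intro closed_Collect_conj closed_Collect_eq continuous_on_const)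
  moreover have "bounded (SO :: (real^'n^'n) set)"
    unfolding bounded_iff using norm_SO by (metis order_refl)
  ultimately show ?thesis by (simp add: compact_eq_bounded_closed)
qed

section \<open>The Cayley transform\<close>

lemma inner_so_mult_self: "X \<in> so \<Longrightarrow> v \<bullet> (X *v v) = 0"
proof -
  assume X: "X \<in> so"
  have "v \<bullet> (X *v v) = (transpose X *v v) \<bullet> v"
    by (simp add: dot_lmul_matrix)
  also have "transpose X *v v = - (X *v v)"
    using X by (simp add: so_def matrix_vector_mult_def vec_eq_iff sum_negf)
  finally show ?thesis by (simp add: inner_commute)
qed

lemma invertible_mat_1_minus_so: "X \<in> so \<Longrightarrow> invertible (mat 1 - X)"
proof -
  assume X: "X \<in> so"
  have "x = 0" if "(mat 1 - X) *v x = 0" for x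
  proof -
    have "x = X *v x" using that by (simp add: matrix_vector_mult_diff_rdistrib)
    then have "x \<bullet> x = x \<bullet> (X *v x)" by simp
    then show "x = 0" using inner_so_mult_self[OF X, of x] by simp
  qed
  then show ?thesis by (simp add: invertible_left_inverse matrix_left_invertible_ker)
qed

definition cayley :: "real^'n^'n \<Rightarrow> real^'n^'n" where
  "cayley X = matrix_inv (mat 1 - X) ** (mat 1 + X)"

lemma cayley_in_SO: "X \<in> so \<Longrightarrow> cayley X \<in> SO"
proof -
  assume X: "X \<in> so"
  define C where "C = cayley X"
  have inv: "matrix_inv (mat 1 - X) ** (mat 1 - X) = mat 1" "(mat 1 - X) ** matrix_inv (mat 1 - X) = mat 1"
    using invertible_mat_1_minus_so[OF X] by (simp_all add: matrix_inv_left matrix_inv_right)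
  have norm_C: "norm (C *v v) = norm v" for v
  proof -
    define w where "w = C *v v"
    have "(mat 1 - X) *v w = (mat 1 + X) *v v"
      by (simp add: w_def C_def cayley_def matrix_vector_mul_assoc matrix_mul_assoc inv)
    then have "w - v = X *v (w + v)"
      by (simp add: matrix_vector_mult_diff_rdistrib matrix_vector_mult_add_rdistrib
          matrix_vector_right_distrib algebra_simps)
    then have "(w - v) \<bullet> (w + v) = 0"
      using inner_so_mult_self[OF X, of "w + v"] by (simp add: inner_commute)
    then have "(norm w)\<^sup>2 = (norm v)\<^sup>2"
      by (simp add: power2_norm_eq_inner algebra_simps inner_commute)
    then show ?thesis by (simp add: w_def power2_eq_iff_nonneg)
  qed
  then have "orthogonal_transformation ((*v) C)"
    by (simp add: orthogonal_transformation matrix_vector_mul_linear)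
  then have "orthogonal_matrix C"
    using orthogonal_transformation_matrix[of "(*v) C"] by (simp add: matrix_of_matrix_vector_mul)
  moreover have "det C = 1"
  proof -
    have "transpose (mat 1 - X) = mat 1 + X"
      using X by (simp add: transpose_diff so_def)
    then have "det (mat 1 + X) = det (mat 1 - X)" by (metis det_transpose)
    moreover have "det (matrix_inv (mat 1 - X)) * det (mat 1 - X) = 1"
      using inv(1) by (metis det_I det_mul)
    ultimately show ?thesis by (simp add: C_def cayley_def det_mul)
  qed
  ultimately show ?thesis by (simp add: SO_def C_def)
qed

lemma
  assumes "X \<in> so"
  shows cayley_plus_mat_1: "cayley X + mat 1 = 2 *\<^sub>R matrix_inv (mat 1 - X)"
    and cayley_minus_mat_1: "cayley X - mat 1 = 2 *\<^sub>R (X + matrix_inv (mat 1 - X) ** X ** X)"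
proof -
  define W where "W = matrix_inv (mat 1 - X)"
  have W: "W ** (mat 1 - X) = mat 1"
    using invertible_mat_1_minus_so[OF assms] by (simp add: W_def matrix_inv_left)
  then have W_eq: "W = mat 1 + W ** X"
    by (simp add: matrix_diff_ldistrib algebra_simps)
  have "cayley X + mat 1 = W ** (mat 1 + X) + W ** (mat 1 - X)"
    by (simp add: cayley_def W_def[symmetric] W)
  also have "\<dots> = W ** (2 *\<^sub>R mat 1)"
    by (simp add: scaleR_2 flip: matrix_add_ldistrib)
  finally show "cayley X + mat 1 = 2 *\<^sub>R W"
    by (simp add: matrix_scalar_ac)
  have "cayley X - mat 1 = W ** (mat 1 + X) - W ** (mat 1 - X)"
    by (simp add: cayley_def W_def[symmetric] W)
  also have "\<dots> = 2 *\<^sub>R (W ** X)"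
    by (simp add: scaleR_2 matrix_add_ldistrib matrix_diff_ldistrib)
  also have "W ** X = X + W ** X ** X"
    by (subst W_eq) (simp add: matrix_add_rdistrib)
  finally show "cayley X - mat 1 = 2 *\<^sub>R (X + W ** X ** X)" .
qed

lemma norm_matrix_inv_mat_1_minus_so:
  assumes "X \<in> (so :: (real^'n^'n) set)"
  shows "norm (matrix_inv (mat 1 - X)) \<le> sqrt CARD('n)"
proof -
  have "norm (matrix_inv (mat 1 - X)) = (1/2) * norm (cayley X + mat 1)"
    using cayley_plus_mat_1[OF assms] by simp
  also have "\<dots> \<le> (1/2) * (norm (cayley X) + norm (mat 1 :: real^'n^'n))"
    by (simp add: norm_triangle_ineq)
  also have "\<dots> = sqrt CARD('n)"
    using norm_SO[OF cayley_in_SO[OF assms]] norm_SO[OF mat_1_in_SO] by simp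
  finally show ?thesis .
qed

lemma cayley_eq_mat_1_imp: "X \<in> so \<Longrightarrow> cayley X = mat 1 \<Longrightarrow> X = 0"
proof -
  assume X: "X \<in> so" and C: "cayley X = mat 1"
  have "(mat 1 - X) ** cayley X = mat 1 + X"
    using invertible_mat_1_minus_so[OF X]
    by (simp add: cayley_def matrix_mul_assoc matrix_inv_right)
  then have "2 *\<^sub>R X = 0"
    using C by (simp add: scaleR_2 algebra_simps)
  then show "X = 0" by simp
qed

section \<open>Maximisers of \<open>trace (R ** Q)\<close> over \<open>SO\<close>\<close>

lemma linear_le_quadratic_imp_eq_0:
  fixes c K :: real
  assumes "\<And>t. t * c \<le> K * t\<^sup>2"
  shows "c = 0"
proof -
  define u where "u = \<bar>K\<bar> + 1"
  have u: "u > 0" by (simp add: u_def)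
  have "(c / u) * c \<le> K * (c / u)\<^sup>2" by (rule assms)
  also have "\<dots> \<le> \<bar>K\<bar> * (c / u)\<^sup>2" by (intro mult_right_mono) auto
  finally have "c\<^sup>2 * u \<le> \<bar>K\<bar> * c\<^sup>2"
    using u by (simp add: field_simps power2_eq_square)
  then have "c\<^sup>2 \<le> 0" by (simp add: u_def algebra_simps)
  then show ?thesis by simp
qed

lemma trace_cayley_mult_ge:
  fixes A S :: "real^'n^'n"
  assumes A: "A \<in> so"
  shows "trace S + t * (2 * trace (A ** S)) - 2 * sqrt CARD('n) * norm (A ** A ** S) * t\<^sup>2
    \<le> trace (cayley (t *\<^sub>R A) ** S)"
proof -
  define X where "X = t *\<^sub>R A"
  define W where "W = matrix_inv (mat 1 - X)"
  have X: "X \<in> so"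
    using A by (simp add: X_def subspace_scale subspace_so)
  have "cayley X = mat 1 + 2 *\<^sub>R (X + W ** X ** X)"
    using cayley_minus_mat_1[OF X] unfolding W_def by (metis add.commute diff_add_cancel)
  then have "cayley X ** S = S + 2 *\<^sub>R (X ** S + W ** X ** X ** S)"
    by (simp add: matrix_add_rdistrib flip: scalar_matrix_assoc)
  also have "X ** S + W ** X ** X ** S = t *\<^sub>R (A ** S) + t\<^sup>2 *\<^sub>R (W ** (A ** A ** S))"
    by (simp add: X_def matrix_scalar_ac matrix_mul_assoc power2_eq_square flip: scalar_matrix_assoc)
  finally have "trace (cayley X ** S)
      = trace S + t * (2 * trace (A ** S)) + 2 * t\<^sup>2 * trace (W ** (A ** A ** S))"
    by (simp add: trace_add trace_scaleR algebra_simps)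
  moreover have "- trace (W ** (A ** A ** S)) \<le> sqrt CARD('n) * norm (A ** A ** S)"
  proof -
    have "\<bar>trace (W ** (A ** A ** S))\<bar> \<le> norm W * norm (A ** A ** S)"
      by (rule abs_trace_matrix_mult_le)
    also have "\<dots> \<le> sqrt CARD('n) * norm (A ** A ** S)"
      unfolding W_def by (intro mult_right_mono norm_matrix_inv_mat_1_minus_so X norm_ge_zero)
    finally show ?thesis by linarith
  qed
  then have "2 * t\<^sup>2 * - trace (W ** (A ** A ** S)) \<le> 2 * t\<^sup>2 * (sqrt CARD('n) * norm (A ** A ** S))"
    by (intro mult_left_mono) auto
  ultimately show ?thesis
    by (simp add: X_def algebra_simps)
qed

text \<open>The first-order coefficient \<open>trace (A ** S)\<close> for \<open>A = transpose S - S\<close> equals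
  \<open>norm (S - transpose S)\<^sup>2 / 2\<close>.\<close>
lemma trace_le_at_mat_1_imp_symmetric:
  fixes S :: "real^'n^'n"
  assumes max: "\<And>M. M \<in> SO \<Longrightarrow> trace (M ** S) \<le> trace S"
  shows "transpose S = S"
proof -
  define A where "A = transpose S - S"
  have A: "A \<in> so"
    by (simp add: A_def so_def transpose_diff)
  have "t * (2 * trace (A ** S)) \<le> (2 * sqrt CARD('n) * norm (A ** A ** S)) * t\<^sup>2" for t
  proof -
    have "t *\<^sub>R A \<in> so"
      using A by (simp add: subspace_scale subspace_so)
    then show ?thesis
      using max[OF cayley_in_SO] trace_cayley_mult_ge[OF A, of S t] by fastforce
  qed
  then have "2 * trace (A ** S) = 0"
    by (rule linear_le_quadratic_imp_eq_0)
  then have "(S - transpose S) \<bullet> S = 0"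
    by (simp add: trace_matrix_mult_eq_inner A_def transpose_diff)
  moreover have "(S - transpose S) \<bullet> transpose S = - ((S - transpose S) \<bullet> S)"
    using inner_transpose[of "S - transpose S" S]
    by (simp add: transpose_diff inner_diff_left)
  ultimately have "(S - transpose S) \<bullet> (S - transpose S) = 0"
    by (simp add: inner_diff_right)
  then show ?thesis by simp
qed

text \<open>If \<open>S X\<close> is symmetric then \<open>X S = - S X\<close>, so \<open>S\<close> can be moved across the Cayley
  transform exactly and \<open>cayley X\<close> is another maximiser.\<close>
lemma Lmap_so_eq_0_imp:
  fixes S :: "real^'n^'n"
  assumes sym: "transpose S = S"
    and unique: "\<And>M. M \<in> SO \<Longrightarrow> trace (M ** S) = trace S \<Longrightarrow> M = mat 1"
    and X: "X \<in> so" and ker: "Lmap S X = 0"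
  shows "X = 0"
proof -
  have "transpose (S ** X) = S ** X"
    using ker by (simp add: Lmap_def Proj_eq_0_iff)
  then have XS: "X ** S = - (S ** X)"
    using X sym by (simp add: matrix_transpose_mul so_def matrix_neg_left) (metis minus_minus)
  define W where "W = matrix_inv (mat 1 - X)"
  have W: "(mat 1 - X) ** W = mat 1"
    using invertible_mat_1_minus_so[OF X] by (simp add: W_def matrix_inv_right)
  have "cayley X ** S = W ** ((mat 1 + X) ** S)"
    by (simp add: cayley_def W_def matrix_mul_assoc)
  also have "(mat 1 + X) ** S = S ** (mat 1 - X)"
    by (simp add: matrix_add_rdistrib matrix_diff_ldistrib XS)
  finally have "trace (cayley X ** S) = trace ((W ** S) ** (mat 1 - X))"
    by (simp add: matrix_mul_assoc)
  also have "\<dots> = trace (((mat 1 - X) ** W) ** S)"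
    by (simp add: trace_mul_sym[of "W ** S"] matrix_mul_assoc)
  also have "\<dots> = trace S"
    by (simp add: W)
  finally have "cayley X = mat 1"
    using unique cayley_in_SO[OF X] by blast
  then show ?thesis using cayley_eq_mat_1_imp[OF X] by blast
qed

lemma
  fixes S :: "real^'n^'n"
  assumes sym: "transpose S = S"
    and unique: "\<And>M. M \<in> SO \<Longrightarrow> trace (M ** S) = trace S \<Longrightarrow> M = mat 1"
  shows bij_betw_Lmap_so: "bij_betw (Lmap S) so so"
    and Lmap_so_bounded_below: "\<exists>c>0. \<forall>X\<in>so. c * norm X \<le> norm (Lmap S X)"
proof -
  have lin: "linear (Lmap S)"
    by (rule linearI)
      (simp_all add: Lmap_def matrix_add_ldistrib matrix_scalar_ac Proj_add Proj_scaleR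
        flip: scalar_matrix_assoc)
  have ker: "\<forall>X\<in>so. Lmap S X = 0 \<longrightarrow> X = 0"
    using Lmap_so_eq_0_imp[OF sym unique] by blast
  have inj: "inj_on (Lmap S) so"
    using ker linear_inj_on_iff_eq_0[OF lin subspace_so] by blast
  have "Lmap S ` so \<subseteq> so"
    by (auto simp: Lmap_def)
  moreover have "dim (Lmap S ` so) = dim (so :: (real^'n^'n) set)"
    by (rule eucl.dim_image_eq[OF lin]) (simp only: span_eq_iff[THEN iffD2, OF subspace_so] inj)
  ultimately have "Lmap S ` so = so"
    using subspace_dim_equal[OF linear_subspace_image[OF lin subspace_so] subspace_so] by simp
  with inj show "bij_betw (Lmap S) so so"
    by (simp add: bij_betw_def)
  show "\<exists>c>0. \<forall>X\<in>so. c * norm X \<le> norm (Lmap S X)"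
    using injective_imp_isometric[OF closed_so subspace_so _ ker] lin
    by (simp add: linear_conv_bounded_linear mult.commute)
qed

lemma trace_matrix_mult_rotate: "trace (M ** (Q ** R)) = trace ((R ** M) ** (Q::real^'n^'n))"
  by (metis matrix_mul_assoc trace_mul_sym)

lemma trace_argmax_imp_symmetric:
  fixes Q R0 :: "real^'n^'n"
  assumes "R0 \<in> SO" and "\<And>R. R \<in> SO \<Longrightarrow> trace (R ** Q) \<le> trace (R0 ** Q)"
  shows "transpose (Q ** R0) = Q ** R0"
proof (rule trace_le_at_mat_1_imp_symmetric)
  fix M :: "real^'n^'n" assume "M \<in> SO"
  then show "trace (M ** (Q ** R0)) \<le> trace (Q ** R0)"
    using assms SO_mult trace_matrix_mult_rotate trace_mul_sym by metis
qed

lemma unique_trace_argmax_shift: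
  fixes Q R0 :: "real^'n^'n"
  assumes "R0 \<in> SO" and "\<And>R. R \<in> SO \<Longrightarrow> trace (R ** Q) = trace (R0 ** Q) \<Longrightarrow> R = R0"
    and "M \<in> SO" and "trace (M ** (Q ** R0)) = trace (Q ** R0)"
  shows "M = mat 1"
proof -
  have "R0 ** M = R0"
    using assms by (metis SO_mult trace_matrix_mult_rotate trace_mul_sym)
  then have "transpose R0 ** (R0 ** M) = transpose R0 ** R0" by simp
  then show ?thesis
    using SO_transpose_mult_self[OF \<open>R0 \<in> SO\<close>] by (simp add: matrix_mul_assoc)
qed

section \<open>Differentiability of a path of maximisers\<close>

lemma unique_max_on_compact_gap:
  fixes f :: "'a::metric_space \<Rightarrow> real"
  assumes "compact K" "continuous_on K f" "x0 \<in> K"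
    and unique: "\<And>x. x \<in> K \<Longrightarrow> x \<noteq> x0 \<Longrightarrow> f x < f x0"
    and "\<epsilon> > 0"
  obtains g where "g > 0" "\<And>x. x \<in> K \<Longrightarrow> \<epsilon> \<le> dist x x0 \<Longrightarrow> f x + g \<le> f x0"
proof (cases "K \<inter> {x. \<epsilon> \<le> dist x x0} = {}")
  case True
  then show ?thesis using that[of 1] by auto
next
  case False
  have "compact (K \<inter> {x. \<epsilon> \<le> dist x x0})"
    using assms by (intro compact_Int_closed closed_Collect_le continuous_intros)
  then obtain x1 where x1: "x1 \<in> K" "\<epsilon> \<le> dist x1 x0"
    and max: "\<And>x. x \<in> K \<Longrightarrow> \<epsilon> \<le> dist x x0 \<Longrightarrow> f x \<le> f x1"
    using continuous_attains_sup[OF _ False continuous_on_subset[OF assms(2)]] by auto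
  have "x1 \<noteq> x0"
    using x1(2) \<open>\<epsilon> > 0\<close> by auto
  then have "f x1 < f x0"
    using unique x1(1) by blast
  then show ?thesis
    using that[of "f x0 - f x1"] max by fastforce
qed

lemma quadratic_bootstrap:
  fixes K d s y r :: real
  assumes "K > 0" "d \<ge> 0" "s \<ge> 0"
    and d: "d \<le> s * y + r" and r: "r \<le> K * (s * d + d\<^sup>2)"
    and small: "K * s \<le> 1/4" "K * d \<le> 1/4"
  shows "r \<le> K * (2 * y + 4 * y\<^sup>2) * s\<^sup>2"
proof -
  have "K * (s * d + d\<^sup>2) \<le> d / 2"
    using mult_right_mono[OF small(1) \<open>d \<ge> 0\<close>] mult_right_mono[OF small(2) \<open>d \<ge> 0\<close>]
    by (simp add: power2_eq_square algebra_simps)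
  then have "d \<le> 2 * s * y"
    using d r by linarith
  then have "s * d + d\<^sup>2 \<le> (2 * y + 4 * y\<^sup>2) * s\<^sup>2"
    using \<open>s \<ge> 0\<close> \<open>d \<ge> 0\<close> mult_left_mono[of d "2 * s * y" s] power_mono[of d "2 * s * y" 2]
    by (simp add: power2_eq_square algebra_simps)
  then have "K * (s * d + d\<^sup>2) \<le> K * ((2 * y + 4 * y\<^sup>2) * s\<^sup>2)"
    using \<open>K > 0\<close> by (simp add: mult_left_mono)
  then show ?thesis
    using r by (simp add: mult.assoc)
qed

lemma has_vector_derivative_at_0_quadratic_remainder:
  fixes f :: "real \<Rightarrow> 'a::real_normed_vector"
  assumes "\<delta> > 0" and rem: "\<And>t. t \<in> T \<Longrightarrow> \<bar>t\<bar> < \<delta> \<Longrightarrow> norm (f t - f 0 - t *\<^sub>R v) \<le> K * t\<^sup>2"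
  shows "(f has_vector_derivative v) (at 0 within T)"
  unfolding has_vector_derivative_def has_derivative_within_alt
proof (intro conjI allI impI bounded_linear_scaleR_left)
  fix e :: real assume "e > 0"
  define d where "d = min \<delta> (e / (\<bar>K\<bar> + 1))"
  have "d > 0" using \<open>\<delta> > 0\<close> \<open>e > 0\<close> by (simp add: d_def)
  moreover have "norm (f t - f 0 - t *\<^sub>R v) \<le> e * \<bar>t\<bar>" if "t \<in> T" "\<bar>t\<bar> < d" for t
  proof -
    have "\<bar>t\<bar> * (\<bar>K\<bar> + 1) < e"
      using that by (simp add: d_def pos_less_divide_eq)
    then have "\<bar>K\<bar> * \<bar>t\<bar> \<le> e"
      by (simp add: algebra_simps)
    then have "\<bar>K\<bar> * \<bar>t\<bar> * \<bar>t\<bar> \<le> e * \<bar>t\<bar>"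
      by (simp add: mult_right_mono)
    moreover have "K * t\<^sup>2 \<le> \<bar>K\<bar> * \<bar>t\<bar> * \<bar>t\<bar>"
      by (simp add: power2_eq_square mult.assoc mult_right_mono)
    moreover have "norm (f t - f 0 - t *\<^sub>R v) \<le> K * t\<^sup>2"
      using rem that by (simp add: d_def)
    ultimately show ?thesis by linarith
  qed
  ultimately show "\<exists>d>0. \<forall>t\<in>T. norm (t - 0) < d \<longrightarrow>
      norm (f t - f 0 - (t - 0) *\<^sub>R v) \<le> e * norm (t - 0)"
    by auto
qed

lemma SO_minus_mat_1_symmetric_part:
  assumes "mat 1 + D \<in> SO"
  shows "D - Proj D = - (1/2) *\<^sub>R (transpose D ** D)"
proof -
  have "transpose (mat 1 + D) ** (mat 1 + D) = mat 1"
    using SO_transpose_mult_self[OF assms] .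
  then have "transpose D + D = - (transpose D ** D)"
    by (simp add: transpose_add matrix_add_ldistrib matrix_add_rdistrib algebra_simps
        eq_neg_iff_add_eq_0)
  moreover have "D - Proj D = (1/2) *\<^sub>R (transpose D + D)"
    by (simp add: Proj_def vec_eq_iff algebra_simps)
  ultimately show ?thesis by simp
qed

locale SO_trace_argmax_path =
  fixes Th :: "real \<Rightarrow> real^'n^'n" and Q0 Q1 :: "real^'n^'n" and T :: "real set"
  assumes zero_in_T: "0 \<in> T"
    and Th_in_SO: "t \<in> T \<Longrightarrow> Th t \<in> SO"
    and Th_max: "t \<in> T \<Longrightarrow> R \<in> SO \<Longrightarrow>
      trace (R ** (Q0 + t *\<^sub>R Q1)) \<le> trace (Th t ** (Q0 + t *\<^sub>R Q1))"
    and Th0_unique: "R \<in> SO \<Longrightarrow> trace (R ** Q0) = trace (Th 0 ** Q0) \<Longrightarrow> R = Th 0"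
begin

lemma Th0_in_SO: "Th 0 \<in> SO"
  using Th_in_SO zero_in_T by blast

lemma Th0_max: "R \<in> SO \<Longrightarrow> trace (R ** Q0) \<le> trace (Th 0 ** Q0)"
  using Th_max[OF zero_in_T] by simp

lemma continuous_Th: "continuous (at 0 within T) Th"
  unfolding continuous_within_eps_delta
proof (intro allI impI)
  fix \<epsilon> :: real assume "\<epsilon> > 0"
  have "continuous_on SO (\<lambda>R. trace (R ** Q0))"
    unfolding trace_matrix_mult_eq_inner
    by (intro continuous_intros linear_continuous_on bounded_linear_transpose)
  moreover have "trace (R ** Q0) < trace (Th 0 ** Q0)" if "R \<in> SO" "R \<noteq> Th 0" for R
    using Th0_max[OF that(1)] Th0_unique[OF that(1)] that(2) by (auto simp: order_less_le)
  ultimately obtain g where "g > 0"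
    and gap: "\<And>R. R \<in> SO \<Longrightarrow> \<epsilon> \<le> dist R (Th 0) \<Longrightarrow> trace (R ** Q0) + g \<le> trace (Th 0 ** Q0)"
    using unique_max_on_compact_gap[OF compact_SO _ Th0_in_SO _ \<open>\<epsilon> > 0\<close>] by blast
  define B where "B = sqrt CARD('n) * norm Q1"
  note B = abs_trace_SO_mult_le[of _ Q1, folded B_def]
  define \<delta> where "\<delta> = g / (2 * B + 1)"
  have "\<delta> > 0"
    using \<open>g > 0\<close> B[OF Th0_in_SO] by (simp add: \<delta>_def)
  moreover have "dist (Th t) (Th 0) < \<epsilon>" if t: "t \<in> T" "dist t 0 < \<delta>" for t
  proof (rule ccontr)
    assume "\<not> dist (Th t) (Th 0) < \<epsilon>"
    then have "trace (Th t ** Q0) + g \<le> trace (Th 0 ** Q0)"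
      using gap Th_in_SO[OF t(1)] by simp
    moreover have "trace (Th 0 ** Q0) + t * trace (Th 0 ** Q1) \<le> trace (Th t ** Q0) + t * trace (Th t ** Q1)"
      using Th_max[OF t(1) Th0_in_SO]
      by (simp add: matrix_add_ldistrib matrix_scalar_ac trace_add trace_scaleR
          flip: scalar_matrix_assoc)
    moreover have "t * trace (Th t ** Q1) - t * trace (Th 0 ** Q1) \<le> 2 * (\<bar>t\<bar> * B)"
    proof -
      have "t * (trace (Th t ** Q1) - trace (Th 0 ** Q1)) \<le> \<bar>t\<bar> * \<bar>trace (Th t ** Q1) - trace (Th 0 ** Q1)\<bar>"
        by (metis abs_ge_self abs_mult)
      also have "\<dots> \<le> \<bar>t\<bar> * (2 * B)"
        using B[OF Th_in_SO[OF t(1)]] B[OF Th0_in_SO] by (intro mult_left_mono) auto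
      finally show ?thesis by (simp add: right_diff_distrib)
    qed
    moreover have "\<bar>t\<bar> * (2 * B + 1) < g"
      using t B[OF Th0_in_SO] by (simp add: \<delta>_def dist_real_def pos_less_divide_eq)
    ultimately show False
      by (simp add: distrib_left)
  qed
  ultimately show "\<exists>\<delta>>0. \<forall>t\<in>T. dist t 0 < \<delta> \<longrightarrow> dist (Th t) (Th 0) < \<epsilon>"
    by blast
qed

lemma symmetric_along: "t \<in> T \<Longrightarrow> transpose ((Q0 + t *\<^sub>R Q1) ** Th t) = (Q0 + t *\<^sub>R Q1) ** Th t"
  using trace_argmax_imp_symmetric[OF Th_in_SO Th_max] by blast

lemma bij_betw_Lmap: "bij_betw (Lmap (Q0 ** Th 0)) so so"
  and Lmap_bounded_below: "\<exists>c>0. \<forall>X\<in>so. c * norm X \<le> norm (Lmap (Q0 ** Th 0) X)"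
  using symmetric_along[OF zero_in_T] unique_trace_argmax_shift[OF Th0_in_SO Th0_unique]
  by (simp_all add: bij_betw_Lmap_so Lmap_so_bounded_below)

definition tangent :: "real^'n^'n" where
  "tangent = inv_into so (Lmap (Q0 ** Th 0)) (- Proj (Q1 ** Th 0))"

lemma tangent_in_so: "tangent \<in> so"
  and Lmap_tangent: "Lmap (Q0 ** Th 0) tangent = - Proj (Q1 ** Th 0)"
  using bij_betw_inv_into_right[OF bij_betw_Lmap] bij_betw_apply[OF bij_betw_inv_into[OF bij_betw_Lmap]]
  by (simp_all add: tangent_def so_uminus)

definition deviation :: "real \<Rightarrow> real^'n^'n" where
  "deviation t = transpose (Th 0) ** Th t - mat 1"

lemma Th_eq_deviation: "Th t = Th 0 ** (mat 1 + deviation t)"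
  by (simp add: deviation_def matrix_mul_assoc SO_mult_transpose_self[OF Th0_in_SO])

lemma deviation_in_SO: "t \<in> T \<Longrightarrow> mat 1 + deviation t \<in> SO"
  by (simp add: deviation_def SO_mult SO_transpose Th0_in_SO Th_in_SO)

lemma norm_deviation: "norm (deviation t) = dist (Th t) (Th 0)"
proof -
  have "deviation t = transpose (Th 0) ** (Th t - Th 0)"
    by (simp add: deviation_def matrix_diff_ldistrib SO_transpose_mult_self[OF Th0_in_SO])
  then show ?thesis
    using Th0_in_SO by (simp add: norm_orthogonal_matrix_mult SO_orthogonal_matrix dist_norm)
qed

lemma Lmap_deviation:
  assumes "t \<in> T"
  defines "D \<equiv> deviation t"
  shows "Lmap (Q0 ** Th 0) (Proj D - t *\<^sub>R tangent)
    = - t *\<^sub>R Proj (Q1 ** (Th 0 ** D)) - Proj (Q0 ** Th 0 ** (D - Proj D))"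
proof -
  have "(Q0 + t *\<^sub>R Q1) ** Th t
      = Q0 ** Th 0 + Q0 ** Th 0 ** D + t *\<^sub>R (Q1 ** Th 0) + t *\<^sub>R (Q1 ** (Th 0 ** D))"
    by (subst Th_eq_deviation)
      (simp add: D_def matrix_add_ldistrib matrix_add_rdistrib matrix_mul_assoc
        flip: scalar_matrix_assoc)
  then have "Proj (Q0 ** Th 0 ** D) + (t *\<^sub>R Proj (Q1 ** Th 0) + t *\<^sub>R Proj (Q1 ** (Th 0 ** D))) = 0"
    using symmetric_along[OF assms(1)] symmetric_along[OF zero_in_T]
    by (simp add: Proj_eq_0_iff[symmetric] Proj_add Proj_scaleR add.assoc)
  then have "Proj (Q0 ** Th 0 ** D) = - (t *\<^sub>R Proj (Q1 ** Th 0) + t *\<^sub>R Proj (Q1 ** (Th 0 ** D)))"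
    by (rule eq_neg_iff_add_eq_0[THEN iffD2])
  then show ?thesis
    using Lmap_tangent
    by (simp add: Lmap_def matrix_diff_ldistrib matrix_scalar_ac Proj_diff Proj_scaleR
        flip: scalar_matrix_assoc)
qed

lemma norm_deviation_symmetric_part:
  assumes "t \<in> T"
  shows "norm (deviation t - Proj (deviation t)) \<le> (norm (deviation t))\<^sup>2"
proof -
  let ?D = "deviation t"
  have "norm (?D - Proj ?D) = norm (transpose ?D ** ?D) / 2"
    by (simp add: SO_minus_mat_1_symmetric_part[OF deviation_in_SO[OF assms]])
  also have "\<dots> \<le> norm (transpose ?D ** ?D)"
    by simp
  also have "\<dots> \<le> (norm ?D)\<^sup>2"
    using norm_matrix_mult_le[of "transpose ?D" ?D] by (simp add: norm_transpose power2_eq_square)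
  finally show ?thesis .
qed

lemma norm_Lmap_deviation_le:
  assumes "t \<in> T"
  defines "D \<equiv> deviation t"
  shows "norm (Lmap (Q0 ** Th 0) (Proj D - t *\<^sub>R tangent))
    \<le> norm Q1 * (\<bar>t\<bar> * norm D) + norm (Q0 ** Th 0) * (norm D)\<^sup>2"
proof -
  let ?P1 = "Proj (Q1 ** (Th 0 ** D))" and ?P2 = "Proj (Q0 ** Th 0 ** (D - Proj D))"
  have "norm ?P1 \<le> norm (Q1 ** (Th 0 ** D))"
    by (rule norm_Proj_le)
  also have "\<dots> \<le> norm Q1 * norm (Th 0 ** D)"
    by (rule norm_matrix_mult_le)
  also have "norm (Th 0 ** D) = norm D"
    using Th0_in_SO by (simp add: SO_orthogonal_matrix norm_orthogonal_matrix_mult)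
  finally have "\<bar>t\<bar> * norm ?P1 \<le> \<bar>t\<bar> * (norm Q1 * norm D)"
    by (simp add: mult_left_mono)
  moreover have "norm ?P2 \<le> norm (Q0 ** Th 0) * (norm D)\<^sup>2"
  proof -
    have "norm ?P2 \<le> norm (Q0 ** Th 0) * norm (D - Proj D)"
      using norm_Proj_le order_trans norm_matrix_mult_le by blast
    also have "\<dots> \<le> norm (Q0 ** Th 0) * (norm D)\<^sup>2"
      using norm_deviation_symmetric_part[OF assms(1)] by (simp add: D_def mult_left_mono)
    finally show ?thesis .
  qed
  moreover have "norm (- t *\<^sub>R ?P1 - ?P2) \<le> \<bar>t\<bar> * norm ?P1 + norm ?P2"
    using norm_triangle_ineq4[of "- t *\<^sub>R ?P1" ?P2] by simp
  ultimately show ?thesis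
    unfolding Lmap_deviation[OF assms(1), folded D_def] by (simp add: mult_ac)
qed

text \<open>The skew part \<open>Proj D\<close> of the deviation is controlled by the invertibility of \<open>Lmap\<close>,
  its symmetric part is quadratic in \<open>D\<close> since \<open>mat 1 + D\<close> is orthogonal.\<close>
lemma deviation_linearisation:
  obtains K where "K > 0"
    and "\<And>t. t \<in> T \<Longrightarrow> norm (deviation t - t *\<^sub>R tangent)
      \<le> K * (\<bar>t\<bar> * norm (deviation t) + (norm (deviation t))\<^sup>2)"
proof -
  obtain c where c: "c > 0" "\<And>X. X \<in> so \<Longrightarrow> c * norm X \<le> norm (Lmap (Q0 ** Th 0) X)"
    using Lmap_bounded_below by blast
  define K where "K = (norm Q1 + norm (Q0 ** Th 0) + c) / c"
  have "norm (deviation t - t *\<^sub>R tangent)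
      \<le> K * (\<bar>t\<bar> * norm (deviation t) + (norm (deviation t))\<^sup>2)" if t: "t \<in> T" for t
  proof -
    define D where "D = deviation t"
    have "Proj D - t *\<^sub>R tangent \<in> so"
      by (intro subspace_diff subspace_scale subspace_so Proj_in_so tangent_in_so)
    then have "c * norm (Proj D - t *\<^sub>R tangent)
        \<le> norm Q1 * (\<bar>t\<bar> * norm D) + norm (Q0 ** Th 0) * (norm D)\<^sup>2"
      using order_trans[OF c(2) norm_Lmap_deviation_le[OF t]] unfolding D_def by blast
    moreover have "c * norm (D - Proj D) \<le> c * (norm D)\<^sup>2"
      using c(1) norm_deviation_symmetric_part[OF t] by (simp add: D_def)
    moreover have "c * norm (D - t *\<^sub>R tangent) \<le> c * norm (Proj D - t *\<^sub>R tangent) + c * norm (D - Proj D)"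
      using c(1) norm_triangle_ineq[of "Proj D - t *\<^sub>R tangent" "D - Proj D"]
      by (simp add: mult_left_mono flip: distrib_left)
    moreover have "0 \<le> norm Q1 * (norm D)\<^sup>2" "0 \<le> norm (Q0 ** Th 0) * (\<bar>t\<bar> * norm D)"
      "0 \<le> c * (\<bar>t\<bar> * norm D)"
      using c(1) by simp_all
    ultimately have "c * norm (D - t *\<^sub>R tangent)
        \<le> (norm Q1 + norm (Q0 ** Th 0) + c) * (\<bar>t\<bar> * norm D + (norm D)\<^sup>2)"
      unfolding distrib_left distrib_right by linarith
    then show ?thesis
      using c(1) by (simp add: D_def K_def field_simps)
  qed
  moreover have "K > 0"
    using c(1) by (simp add: K_def add_nonneg_pos)
  ultimately show thesis
    using that by blast
qed

lemma quadratic_remainder: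
  obtains \<delta> K where "\<delta> > 0"
    and "\<And>t. t \<in> T \<Longrightarrow> \<bar>t\<bar> < \<delta> \<Longrightarrow> norm (Th t - Th 0 - t *\<^sub>R (Th 0 ** tangent)) \<le> K * t\<^sup>2"
proof -
  obtain K where K: "K > 0" and lin: "\<And>t. t \<in> T \<Longrightarrow> norm (deviation t - t *\<^sub>R tangent)
      \<le> K * (\<bar>t\<bar> * norm (deviation t) + (norm (deviation t))\<^sup>2)"
    using deviation_linearisation by blast
  have "1 / (4 * K) > 0"
    using K by simp
  then obtain \<delta>1 where "\<delta>1 > 0"
    and \<delta>1: "\<And>t. t \<in> T \<Longrightarrow> dist t 0 < \<delta>1 \<Longrightarrow> dist (Th t) (Th 0) < 1 / (4 * K)"
    using continuous_Th unfolding continuous_within_eps_delta by blast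
  define \<delta> where "\<delta> = min \<delta>1 (1 / (4 * K))"
  have "norm (Th t - Th 0 - t *\<^sub>R (Th 0 ** tangent))
      \<le> K * (2 * norm tangent + 4 * (norm tangent)\<^sup>2) * t\<^sup>2" if t: "t \<in> T" "\<bar>t\<bar> < \<delta>" for t
  proof -
    have "K * norm (deviation t) \<le> 1/4"
      using \<delta>1[OF t(1)] t(2) K by (simp add: \<delta>_def norm_deviation field_simps)
    moreover have "K * \<bar>t\<bar> \<le> 1/4"
      using t(2) K by (simp add: \<delta>_def field_simps)
    moreover have "norm (deviation t) \<le> \<bar>t\<bar> * norm tangent + norm (deviation t - t *\<^sub>R tangent)"
      using norm_triangle_ineq[of "t *\<^sub>R tangent" "deviation t - t *\<^sub>R tangent"] by simp
    ultimately have "norm (deviation t - t *\<^sub>R tangent) \<le> K * (2 * norm tangent + 4 * (norm tangent)\<^sup>2) * \<bar>t\<bar>\<^sup>2"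
      using quadratic_bootstrap[OF K norm_ge_zero abs_ge_zero _ lin[OF t(1)]] by blast
    moreover have "Th t - Th 0 - t *\<^sub>R (Th 0 ** tangent) = Th 0 ** (deviation t - t *\<^sub>R tangent)"
      by (subst Th_eq_deviation[of t])
        (simp add: matrix_add_ldistrib matrix_diff_ldistrib matrix_scalar_ac flip: scalar_matrix_assoc)
    ultimately show ?thesis
      using Th0_in_SO by (simp add: norm_orthogonal_matrix_mult SO_orthogonal_matrix)
  qed
  moreover have "\<delta> > 0"
    using \<open>\<delta>1 > 0\<close> K by (simp add: \<delta>_def)
  ultimately show thesis
    using that by blast
qed

lemma has_vector_derivative_Th: "(Th has_vector_derivative Th 0 ** tangent) (at 0 within T)"
proof -
  obtain \<delta> K where "\<delta> > 0"
    and "\<And>t. t \<in> T \<Longrightarrow> \<bar>t\<bar> < \<delta> \<Longrightarrow> norm (Th t - Th 0 - t *\<^sub>R (Th 0 ** tangent)) \<le> K * t\<^sup>2"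
    using quadratic_remainder by blast
  then show ?thesis
    by (rule has_vector_derivative_at_0_quadratic_remainder)
qed

end

section \<open>The rotation of the nearest crystal\<close>

lemma trace_mult_Qm: "trace (R ** Qm z y) = (\<Sum>i\<in>UNIV. y $ i \<bullet> (R *v z $ i))"
proof -
  have "trace (R ** Qm z y) = (\<Sum>a\<in>UNIV. \<Sum>b\<in>UNIV. \<Sum>i\<in>UNIV. R$a$b * (z$i$b * y$i$a))"
    by (simp add: trace_def matrix_matrix_mult_def Qm_def outer_def sum_component sum_distrib_left)
  also have "\<dots> = (\<Sum>i\<in>UNIV. \<Sum>a\<in>UNIV. \<Sum>b\<in>UNIV. R$a$b * (z$i$b * y$i$a))"
    by (subst sum.swap) (rule sum.cong[OF refl], rule sum.swap)
  also have "\<dots> = (\<Sum>i\<in>UNIV. y $ i \<bullet> (R *v z $ i))"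
    by (simp add: inner_vec_def matrix_vector_mult_def sum_distrib_left mult_ac)
  finally show ?thesis .
qed

lemma dist_phi_squared:
  fixes z y :: "real^'d^'n"
  assumes "R \<in> SO" and "centered z"
  shows "(dist y (phi R \<eta> z))\<^sup>2
    = (\<Sum>i\<in>UNIV. (norm (y $ i - \<eta>))\<^sup>2) + (\<Sum>i\<in>UNIV. (norm (z $ i))\<^sup>2) - 2 * trace (R ** Qm z y)"
proof -
  have norm_R: "norm (R *v v) = norm v" for v
    using assms(1) orthogonal_transformation_matrix[of "(*v) R"]
    by (simp add: SO_def matrix_of_matrix_vector_mul orthogonal_transformation_norm)
  have "(dist y (phi R \<eta> z))\<^sup>2 = (\<Sum>i\<in>UNIV. (norm ((y $ i - \<eta>) - R *v z $ i))\<^sup>2)"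
    by (simp add: dist_norm norm_vec_def L2_set_def sum_nonneg phi_def algebra_simps)
  also have "\<dots> = (\<Sum>i\<in>UNIV. (norm (y $ i - \<eta>))\<^sup>2 - 2 * ((y $ i - \<eta>) \<bullet> (R *v z $ i)) + (norm (z $ i))\<^sup>2)"
    by (intro sum.cong refl) (simp add: dot_norm_neg norm_R field_simps)
  also have "\<dots> = (\<Sum>i\<in>UNIV. (norm (y $ i - \<eta>))\<^sup>2) + (\<Sum>i\<in>UNIV. (norm (z $ i))\<^sup>2)
      - 2 * (\<Sum>i\<in>UNIV. (y $ i - \<eta>) \<bullet> (R *v z $ i))"
    by (simp add: sum.distrib sum_subtractf sum_distrib_left)
  also have "(\<Sum>i\<in>UNIV. (y $ i - \<eta>) \<bullet> (R *v z $ i)) = trace (R ** Qm z y) - \<eta> \<bullet> (R *v (\<Sum>i\<in>UNIV. z $ i))"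
    by (simp add: trace_mult_Qm inner_diff_left sum_subtractf inner_sum_right vec.sum)
  also have "(\<Sum>i\<in>UNIV. z $ i) = 0"
    using assms(2) by (simp add: centered_def)
  finally show ?thesis by simp
qed

lemma theta_trace_argmax:
  fixes z y :: "real^'d^'n"
  assumes "centered z"
    and welldef: "\<forall>R1\<in>SO. \<forall>R2\<in>SO. \<forall>\<eta>1 \<eta>2. phi R1 \<eta>1 z = phi R2 \<eta>2 z \<longrightarrow> R1 = R2"
    and "cbar_ok z cbar" and "y \<in> zdom z cbar"
  shows "theta z y \<in> SO"
    and "\<And>R. R \<in> SO \<Longrightarrow> trace (R ** Qm z y) \<le> trace (theta z y ** Qm z y)"
    and "\<And>R. R \<in> SO \<Longrightarrow> trace (R ** Qm z y) = trace (theta z y ** Qm z y) \<Longrightarrow> R = theta z y"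
proof -
  let ?nearest = "\<lambda>w. w \<in> Mfd z \<and> (\<forall>w'\<in>Mfd z. dist y w \<le> dist y w')"
  have ex1: "\<exists>!w. ?nearest w"
    using assms(3,4) by (simp add: cbar_ok_def)
  then have nearest: "?nearest (zmin z y)"
    unfolding zmin_def by (rule theI')
  then obtain R0 \<eta> where R0: "R0 \<in> SO" and zmin: "zmin z y = phi R0 \<eta> z"
    by (auto simp: Mfd_def)
  have theta: "theta z y = R0"
    unfolding theta_def using R0 zmin welldef by (intro the_equality) metis+
  have phi_in: "phi R \<eta> z \<in> Mfd z" if "R \<in> SO" for R
    using that by (auto simp: Mfd_def)
  have dist_iff: "dist y (phi R0 \<eta> z) \<le> dist y (phi R \<eta> z) \<longleftrightarrow> trace (R ** Qm z y) \<le> trace (R0 ** Qm z y)"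
    if "R \<in> SO" for R
  proof -
    have "dist y (phi R0 \<eta> z) \<le> dist y (phi R \<eta> z)
        \<longleftrightarrow> (dist y (phi R0 \<eta> z))\<^sup>2 \<le> (dist y (phi R \<eta> z))\<^sup>2"
      by (simp add: power_mono_iff)
    then show ?thesis
      by (simp add: dist_phi_squared[OF that \<open>centered z\<close>] dist_phi_squared[OF R0 \<open>centered z\<close>])
  qed
  show "theta z y \<in> SO"
    using R0 theta by simp
  show "trace (R ** Qm z y) \<le> trace (theta z y ** Qm z y)" if "R \<in> SO" for R
    using nearest phi_in[OF that] dist_iff[OF that] zmin theta by simp
  show "R = theta z y" if "R \<in> SO" and "trace (R ** Qm z y) = trace (theta z y ** Qm z y)" for R
  proof -
    have "(dist y (phi R \<eta> z))\<^sup>2 = (dist y (phi R0 \<eta> z))\<^sup>2"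
      using that(2) theta
      by (simp add: dist_phi_squared[OF that(1) \<open>centered z\<close>] dist_phi_squared[OF R0 \<open>centered z\<close>])
    then have "dist y (phi R \<eta> z) = dist y (zmin z y)"
      using zmin by (simp add: power2_eq_iff_nonneg)
    then have "?nearest (phi R \<eta> z)"
      using nearest phi_in[OF that(1)] by simp
    then have "phi R \<eta> z = phi R0 \<eta> z"
      using ex1 nearest zmin by metis
    then show ?thesis
      using welldef that(1) R0 theta by blast
  qed
qed

lemma Qm_add_scaleR_Edir: "Qm z (x + t *\<^sub>R Edir i \<gamma>) = Qm z x + t *\<^sub>R outer (z $ i) (axis \<gamma> 1)"
proof -
  have "outer (z $ j) ((x + t *\<^sub>R Edir i \<gamma>) $ j)
      = outer (z $ j) (x $ j) + t *\<^sub>R (if j = i then outer (z $ j) (axis \<gamma> 1) else 0)" for j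
    by (simp add: outer_def Edir_def vec_eq_iff algebra_simps)
  then show ?thesis
    by (simp add: Qm_def sum.distrib flip: scaleR_sum_right)
qed

lemma Proj_outer_matrix_inv_SO:
  assumes "R \<in> SO"
  shows "Proj (outer (matrix_inv R *v e) u) = - Proj (outer u e ** R)"
proof -
  have "outer u e ** R = outer u (transpose R *v e)"
    by (simp add: outer_def matrix_matrix_mult_def matrix_vector_mult_def transpose_def vec_eq_iff
        sum_distrib_left mult_ac)
  moreover have "transpose (outer u (transpose R *v e)) = outer (matrix_inv R *v e) u"
    using assms by (simp add: matrix_inv_SO outer_def transpose_def vec_eq_iff)
  ultimately show ?thesis
    by (metis Proj_transpose)
qed

lemma SO_trace_argmax_path_theta:
  fixes z x :: "real^'d^'n"
  assumes "centered z"
    and "\<forall>R1\<in>SO. \<forall>R2\<in>SO. \<forall>\<eta>1 \<eta>2. phi R1 \<eta>1 z = phi R2 \<eta>2 z \<longrightarrow> R1 = R2"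
    and "cbar_ok z cbar" and x: "x \<in> zdom z cbar"
  shows "SO_trace_argmax_path (\<lambda>t. theta z (x + t *\<^sub>R Edir i \<gamma>)) (Qm z x) (outer (z $ i) (axis \<gamma> 1))
    {t. x + t *\<^sub>R Edir i \<gamma> \<in> zdom z cbar}"
proof
  note argmax = theta_trace_argmax[OF assms(1-3)]
  show "0 \<in> {t. x + t *\<^sub>R Edir i \<gamma> \<in> zdom z cbar}"
    using x by simp
  show "theta z (x + t *\<^sub>R Edir i \<gamma>) \<in> SO" if "t \<in> {t. x + t *\<^sub>R Edir i \<gamma> \<in> zdom z cbar}" for t
    using argmax(1) that by simp
  show "trace (R ** (Qm z x + t *\<^sub>R outer (z $ i) (axis \<gamma> 1)))
      \<le> trace (theta z (x + t *\<^sub>R Edir i \<gamma>) ** (Qm z x + t *\<^sub>R outer (z $ i) (axis \<gamma> 1)))"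
    if "t \<in> {t. x + t *\<^sub>R Edir i \<gamma> \<in> zdom z cbar}" and "R \<in> SO" for t R
    using argmax(2)[OF _ that(2), of "x + t *\<^sub>R Edir i \<gamma>"] that(1)
    by (simp add: Qm_add_scaleR_Edir)
  show "R = theta z (x + 0 *\<^sub>R Edir i \<gamma>)"
    if "R \<in> SO" and "trace (R ** Qm z x) = trace (theta z (x + 0 *\<^sub>R Edir i \<gamma>) ** Qm z x)" for R
    using argmax(3)[OF x that(1)] that(2) by simp
qed

theorem proposition4p2:
  fixes U :: "real \<Rightarrow> real" and a b cbar :: real
    and z x :: "real^'d^'n" and i :: 'n and \<gamma> :: 'd
  assumes U: "C3_0 U" and U_even: "\<forall>r. U (- r) = U r"
    and a_pos: "a > 0" and a_min: "\<forall>r\<ge>0. U a \<le> U r"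
    and a_unique: "\<forall>r>0. U r = U a \<longrightarrow> r = a"
    and U2: "deriv (deriv U) a > 0"
    and b_def: "b = Inf {r. r > 0 \<and> (\<forall>s>r. U s = 0)}"
    and cryst: "crystal a b z" and cent: "centered z" and rigid: "inf_rigid a z"
    and theta_welldef: "\<forall>R1\<in>SO. \<forall>R2\<in>SO. \<forall>\<eta>1 \<eta>2. phi R1 \<eta>1 z = phi R2 \<eta>2 z \<longrightarrow> R1 = R2"
    and cbar: "cbar_ok z cbar"
    and x: "x \<in> Minf z cbar cbar"
  shows "bij_betw (Lmap (Qm z x ** theta z x)) so so \<and>
    ((\<lambda>t. theta z (x + t *\<^sub>R Edir i \<gamma>)) has_vector_derivative
       (theta z x ** inv_into so (Lmap (Qm z x ** theta z x))
          (Proj (outer (matrix_inv (theta z x) *v axis \<gamma> 1) (z$i)))))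
     (at 0 within {t. x + t *\<^sub>R Edir i \<gamma> \<in> zdom z cbar})"
proof -
  have "x \<in> zdom z cbar"
    using x by (simp add: Minf_def)
  then interpret SO_trace_argmax_path "\<lambda>t. theta z (x + t *\<^sub>R Edir i \<gamma>)" "Qm z x"
      "outer (z $ i) (axis \<gamma> 1)" "{t. x + t *\<^sub>R Edir i \<gamma> \<in> zdom z cbar}"
    by (rule SO_trace_argmax_path_theta[OF cent theta_welldef cbar])
  have "Proj (outer (matrix_inv (theta z x) *v axis \<gamma> 1) (z $ i))
      = - Proj (outer (z $ i) (axis \<gamma> 1) ** theta z x)"
    using Proj_outer_matrix_inv_SO Th0_in_SO by simp
  then show ?thesis
    using bij_betw_Lmap has_vector_derivative_Th by (simp add: tangent_def)
qed

end
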